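(* Under the hypotheses of the following setting: $\{e_n\}_{n\in\mathbb{Z}}$ i.i.d. real random variables with a continuous, bounded, strictly positive density on $\mathbb{R}$; $q,d\ge1$ integers; $r,\mu_1,\mu_2,\phi_i,\psi_i\in\mathbb{R}$; and $\{y_n\}_{n\in\mathbb{Z}}$ the unique strictly stationary solution of $$y_n=\begin{cases}\mu_1+e_n+\sum_{i=1}^q\phi_ie_{n-i}, & \text{if } y_{n-d}\le r,\\ \mu_2+e_n+\sum_{i=1}^q\psi_ie_{n-i}, & \text{if } y_{n-d}>r,\end{cases}$$ there exists $\rho\in(0,1)$ such that for all $-\infty\le u_1<u_2\le\infty$ and $-\infty\le v_1<v_2\le\infty$, $$\operatorname{Cov}\big(\mathbb{1}(u_1<y_0\le u_2),\ \mathbb{1}(v_1<y_k\le v_2)\big)=O(\rho^k)\quad\text{as } k\to\infty.$$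
   Context: $\mathbb{1}(\cdot)$ denotes the indicator function. A solution means a process on the same probability space as $\{e_n\}$ satisfying the equation almost surely for every $n$. *)

theory Defs
  imports "HOL-Probability.Probability" "HOL-Library.Landau_Symbols"
begin

definition covariance :: "'a measure \<Rightarrow> ('a \<Rightarrow> real) \<Rightarrow> ('a \<Rightarrow> real) \<Rightarrow> real" where
  "covariance M X Y =
     (LINT \<omega>|M. (X \<omega> - (LINT \<eta>|M. X \<eta>)) * (Y \<omega> - (LINT \<eta>|M. Y \<eta>)))"

definition strictly_stationary :: "'a measure \<Rightarrow> (int \<Rightarrow> 'a \<Rightarrow> real) \<Rightarrow> bool" where
  "strictly_stationary M X \<longleftrightarrow>
     (\<forall>S h. finite S \<longrightarrow>
        distr M (PiM S (\<lambda>_. borel)) (\<lambda>\<omega>. \<lambda>n\<in>S. X (n + h) \<omega>) =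
        distr M (PiM S (\<lambda>_. borel)) (\<lambda>\<omega>. \<lambda>n\<in>S. X n \<omega>))"

definition ind_interval :: "ereal \<Rightarrow> ereal \<Rightarrow> real \<Rightarrow> real" where
  "ind_interval u1 u2 x = (if u1 < ereal x \<and> ereal x \<le> u2 then 1 else 0)"

end

theory Submission
  imports Defs
begin

(* Call t an anchor if e_t <= r - K and |e_(t-i)| <= 1 for i = 1..q, where K bounds the
   intercepts and MA coefficients.  At an anchor both regimes give y_t <= r, so the regime of
   y_(t+d) is known, and inductively every y_(t+jd) is a function of the noise on [t-q, t+jd] only.
   Looking back from n at the candidates n - j*B (j = 1..N, block length B = d(q+1) > q), the first
   anchor reconstructs y_n exactly.  The candidate windows are disjoint, so with p = P(anchor) > 0
   the reconstruction fails with probability (1-p)^N.  For N*B + q < k the reconstructions of y_0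
   and y_k depend on disjoint noise windows, hence are independent, and a perturbation bound for
   covariances of [0,1]-valued variables gives |Cov| <= 4 (1-p)^N, i.e. O(rho^k) with
   rho = max(1-p, 1/2)^(1/B). *)

lemma (in prob_space) prob_pred_eq_expectation:
  assumes "Measurable.pred M P"
  shows "prob {\<omega>\<in>space M. P \<omega>} = expectation (\<lambda>\<omega>. if P \<omega> then 1 else 0)"
proof -
  have "expectation (\<lambda>\<omega>. if P \<omega> then 1 else 0) = expectation (indicator {\<omega>\<in>space M. P \<omega>})"
    by (rule Bochner_Integration.integral_cong) (auto simp: indicator_def)
  also have "\<dots> = prob {\<omega>\<in>space M. P \<omega>}"
    using assms by simp
  finally show ?thesis by simp
qed

lemma (in prob_space) expectation_unit_interval:
  fixes g :: "'a \<Rightarrow> real"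
  assumes g: "g \<in> borel_measurable M" and unit: "\<And>\<omega>. 0 \<le> g \<omega> \<and> g \<omega> \<le> 1"
  shows "integrable M g" and "0 \<le> expectation g" and "expectation g \<le> 1"
proof -
  show int: "integrable M g"
    by (rule integrable_const_bound[where B=1]) (use g unit in \<open>auto simp: abs_le_iff\<close>)
  show "0 \<le> expectation g"
    using unit by (simp add: Bochner_Integration.integral_nonneg)
  have "expectation g \<le> expectation (\<lambda>_. 1)"
    using int unit by (intro integral_mono) auto
  then show "expectation g \<le> 1"
    by (simp add: prob_space)
qed

lemma (in prob_space) expectation_diff_le_prob:
  fixes g g' :: "'a \<Rightarrow> real"
  assumes g: "g \<in> borel_measurable M" "\<And>\<omega>. 0 \<le> g \<omega> \<and> g \<omega> \<le> 1"
    and g': "g' \<in> borel_measurable M" "\<And>\<omega>. 0 \<le> g' \<omega> \<and> g' \<omega> \<le> 1"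
    and E: "E \<in> events" and differ: "AE \<omega> in M. g \<omega> \<noteq> g' \<omega> \<longrightarrow> \<omega> \<in> E"
  shows "\<bar>expectation g - expectation g'\<bar> \<le> prob E"
proof -
  have ig: "integrable M g" "integrable M g'"
    using expectation_unit_interval(1)[OF g] expectation_unit_interval(1)[OF g'] by auto
  have iE: "integrable M (indicator E :: 'a \<Rightarrow> real)"
    using E by (simp add: emeasure_eq_measure)
  have pointwise: "AE \<omega> in M. \<bar>g \<omega> - g' \<omega>\<bar> \<le> indicator E \<omega>"
    using differ
  proof eventually_elim
    case (elim \<omega>)
    then show ?case using g(2)[of \<omega>] g'(2)[of \<omega>] by (auto simp: indicator_def abs_le_iff)
  qed
  have "\<bar>expectation g - expectation g'\<bar> = \<bar>expectation (\<lambda>\<omega>. g \<omega> - g' \<omega>)\<bar>"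
    using ig by simp
  also have "\<dots> \<le> expectation (\<lambda>\<omega>. \<bar>g \<omega> - g' \<omega>\<bar>)"
    by (rule integral_abs_bound)
  also have "\<dots> \<le> expectation (indicator E)"
    using ig iE pointwise by (intro integral_mono_AE) auto
  also have "\<dots> = prob E"
    using E by simp
  finally show ?thesis .
qed

lemma (in prob_space) covariance_eq:
  assumes "integrable M a" "integrable M b" "integrable M (\<lambda>\<omega>. a \<omega> * b \<omega>)"
  shows "covariance M a b = expectation (\<lambda>\<omega>. a \<omega> * b \<omega>) - expectation a * expectation b"
proof -
  have "covariance M a b = expectation (\<lambda>\<omega>. a \<omega> * b \<omega> - expectation a * b \<omega>
                                         - expectation b * a \<omega> + expectation a * expectation b)"
    unfolding covariance_def by (simp add: algebra_simps)
  also have "\<dots> = expectation (\<lambda>\<omega>. a \<omega> * b \<omega>) - expectation a * expectation b"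
    using assms by (simp add: prob_space)
  finally show ?thesis .
qed

lemma (in prob_space) covariance_perturbation_bound:
  fixes a b a' b' :: "'a \<Rightarrow> real"
  assumes meas: "a \<in> borel_measurable M" "b \<in> borel_measurable M"
                "a' \<in> borel_measurable M" "b' \<in> borel_measurable M"
    and unit: "\<And>\<omega>. 0 \<le> a \<omega> \<and> a \<omega> \<le> 1" "\<And>\<omega>. 0 \<le> b \<omega> \<and> b \<omega> \<le> 1"
              "\<And>\<omega>. 0 \<le> a' \<omega> \<and> a' \<omega> \<le> 1" "\<And>\<omega>. 0 \<le> b' \<omega> \<and> b' \<omega> \<le> 1"
    and E: "E1 \<in> events" "E2 \<in> events"
    and differ: "AE \<omega> in M. a \<omega> \<noteq> a' \<omega> \<longrightarrow> \<omega> \<in> E1"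
                "AE \<omega> in M. b \<omega> \<noteq> b' \<omega> \<longrightarrow> \<omega> \<in> E2"
    and uncorrelated: "expectation (\<lambda>\<omega>. a' \<omega> * b' \<omega>) = expectation a' * expectation b'"
  shows "\<bar>covariance M a b\<bar> \<le> 2 * (prob E1 + prob E2)"
proof -
  have unit_mult: "0 \<le> u * v \<and> u * v \<le> 1" if "0 \<le> u \<and> u \<le> 1" "0 \<le> v \<and> v \<le> 1" for u v :: real
    using that by (simp add: mult_le_one)
  have int: "integrable M a" "integrable M b" "integrable M (\<lambda>\<omega>. a \<omega> * b \<omega>)"
    using meas unit by (auto intro!: expectation_unit_interval(1) unit_mult)
  have differ_products: "AE \<omega> in M. a \<omega> * b \<omega> \<noteq> a' \<omega> * b' \<omega> \<longrightarrow> \<omega> \<in> E1 \<union> E2"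
    using differ by eventually_elim auto
  have "\<bar>expectation (\<lambda>\<omega>. a \<omega> * b \<omega>) - expectation (\<lambda>\<omega>. a' \<omega> * b' \<omega>)\<bar> \<le> prob (E1 \<union> E2)"
    using meas unit E by (intro expectation_diff_le_prob differ_products unit_mult) auto
  also have "\<dots> \<le> prob E1 + prob E2"
    using E by (rule measure_Un_le)
  finally have products: "\<bar>expectation (\<lambda>\<omega>. a \<omega> * b \<omega>) - expectation (\<lambda>\<omega>. a' \<omega> * b' \<omega>)\<bar>
                          \<le> prob E1 + prob E2" .
  have diff_a: "\<bar>expectation a - expectation a'\<bar> \<le> prob E1"
    using meas unit E differ by (intro expectation_diff_le_prob) auto
  have diff_b: "\<bar>expectation b - expectation b'\<bar> \<le> prob E2"
    using meas unit E differ by (intro expectation_diff_le_prob) auto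
  have "\<bar>expectation a\<bar> \<le> 1" "\<bar>expectation b'\<bar> \<le> 1"
    using expectation_unit_interval(2,3) meas unit by (auto simp: abs_le_iff)
  then have "\<bar>expectation a * (expectation b - expectation b')\<bar> \<le> prob E2"
    and "\<bar>expectation b' * (expectation a - expectation a')\<bar> \<le> prob E1"
    using diff_a diff_b unfolding abs_mult by (auto intro: mult_left_le_one_le[THEN order_trans])
  moreover have "expectation a * expectation b - expectation a' * expectation b'
      = expectation a * (expectation b - expectation b') + expectation b' * (expectation a - expectation a')"
    by (simp add: algebra_simps)
  ultimately have factors:
    "\<bar>expectation a * expectation b - expectation a' * expectation b'\<bar> \<le> prob E1 + prob E2"
    by linarith
  have "covariance M a b = (expectation (\<lambda>\<omega>. a \<omega> * b \<omega>) - expectation (\<lambda>\<omega>. a' \<omega> * b' \<omega>))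
                         - (expectation a * expectation b - expectation a' * expectation b')"
    using covariance_eq[OF int] uncorrelated by simp
  then have "\<bar>covariance M a b\<bar> \<le> \<bar>expectation (\<lambda>\<omega>. a \<omega> * b \<omega>) - expectation (\<lambda>\<omega>. a' \<omega> * b' \<omega>)\<bar>
                         + \<bar>expectation a * expectation b - expectation a' * expectation b'\<bar>"
    by (simp only: abs_triangle_ineq4)
  also have "\<dots> \<le> (prob E1 + prob E2) + (prob E1 + prob E2)"
    using products factors by (rule add_mono)
  finally show ?thesis
    by (simp only: mult_2)
qed

lemma (in prob_space) indep_vars_functions_uncorrelated:
  fixes X :: "'i \<Rightarrow> 'a \<Rightarrow> real" and F G :: "('i \<Rightarrow> real) \<Rightarrow> real"
  assumes indep: "indep_vars (\<lambda>_. borel) X UNIV"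
    and meas: "F \<in> borel_measurable (PiM UNIV (\<lambda>_. borel))"
              "G \<in> borel_measurable (PiM UNIV (\<lambda>_. borel))"
    and local_F: "\<And>x x'. (\<forall>i\<in>S. x i = x' i) \<Longrightarrow> F x = F x'"
    and local_G: "\<And>x x'. (\<forall>i\<in>T. x i = x' i) \<Longrightarrow> G x = G x'"
    and bounded: "\<And>x. \<bar>F x\<bar> \<le> B" "\<And>x. \<bar>G x\<bar> \<le> B"
    and disjoint: "S \<inter> T = {}"
  shows "expectation (\<lambda>\<omega>. F (\<lambda>i. X i \<omega>) * G (\<lambda>i. X i \<omega>))
         = expectation (\<lambda>\<omega>. F (\<lambda>i. X i \<omega>)) * expectation (\<lambda>\<omega>. G (\<lambda>i. X i \<omega>))"
proof -
  define extend :: "'i set \<Rightarrow> ('i \<Rightarrow> real) \<Rightarrow> 'i \<Rightarrow> real" where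
    "extend U z = (\<lambda>i. if i \<in> U then z i else 0)" for U z
  have extend_meas: "extend U \<in> measurable (PiM U (\<lambda>_. borel)) (PiM UNIV (\<lambda>_. borel))" for U
  proof -
    have "(\<lambda>z. \<lambda>i\<in>UNIV. if i \<in> U then z i else 0)
          \<in> measurable (PiM U (\<lambda>_. borel)) (PiM UNIV (\<lambda>_. borel :: real measure))"
    proof (rule measurable_restrict)
      fix i
      show "(\<lambda>z. if i \<in> U then z i else 0) \<in> borel_measurable (PiM U (\<lambda>_. borel))"
        by (cases "i \<in> U") auto
    qed
    then show ?thesis
      unfolding extend_def restrict_UNIV .
  qed
  have X_meas: "X i \<in> borel_measurable M" for i
    using indep unfolding indep_vars_def by auto
  have path_meas: "(\<lambda>\<omega>. (\<lambda>i. X i \<omega>)) \<in> measurable M (PiM UNIV (\<lambda>_. borel))"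
    using measurable_restrict[of UNIV "\<lambda>i \<omega>. X i \<omega>" M "\<lambda>_. borel"] X_meas
    by (simp add: restrict_UNIV)
  have restricted: "indep_var (PiM S (\<lambda>_. borel)) (\<lambda>\<omega>. restrict (\<lambda>i. X i \<omega>) S)
                              (PiM T (\<lambda>_. borel)) (\<lambda>\<omega>. restrict (\<lambda>i. X i \<omega>) T)"
    by (rule indep_var_restrict[OF indep disjoint]) auto
  have composed: "indep_var borel ((F \<circ> extend S) \<circ> (\<lambda>\<omega>. restrict (\<lambda>i. X i \<omega>) S))
                            borel ((G \<circ> extend T) \<circ> (\<lambda>\<omega>. restrict (\<lambda>i. X i \<omega>) T))"
    by (rule indep_var_compose[OF restricted]) (auto intro: measurable_comp[OF extend_meas] meas)
  have "(F \<circ> extend S) \<circ> (\<lambda>\<omega>. restrict (\<lambda>i. X i \<omega>) S) = (\<lambda>\<omega>. F (\<lambda>i. X i \<omega>))"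
    by (rule ext, simp, rule local_F) (simp add: extend_def)
  moreover have "(G \<circ> extend T) \<circ> (\<lambda>\<omega>. restrict (\<lambda>i. X i \<omega>) T) = (\<lambda>\<omega>. G (\<lambda>i. X i \<omega>))"
    by (rule ext, simp, rule local_G) (simp add: extend_def)
  moreover have "integrable M (\<lambda>\<omega>. F (\<lambda>i. X i \<omega>))" "integrable M (\<lambda>\<omega>. G (\<lambda>i. X i \<omega>))"
    using bounded by (auto intro!: integrable_const_bound[where B=B]
                             measurable_compose[OF path_meas] meas)
  ultimately show ?thesis
    using indep_var_lebesgue_integral composed by metis
qed

lemma (in prob_space) prob_identically_distributed:
  assumes "distributed M lborel X g" "distributed M lborel X' g" "B \<in> sets borel"
  shows "prob (X -` B \<inter> space M) = prob (X' -` B \<inter> space M)"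
proof -
  have "X \<in> borel_measurable M" "X' \<in> borel_measurable M"
    using assms(1,2) by (auto dest: distributed_measurable)
  then have "prob (X -` B \<inter> space M) = measure (distr M lborel X) B"
    and "prob (X' -` B \<inter> space M) = measure (distr M lborel X') B"
    using assms(3) by (auto simp: measure_distr)
  moreover have "distr M lborel X = distr M lborel X'"
    using assms(1,2) unfolding distributed_def by simp
  ultimately show ?thesis
    by simp
qed

lemma (in prob_space) prob_positive_density:
  fixes f :: "real \<Rightarrow> real"
  assumes dens: "distributed M lborel X (\<lambda>x. ennreal (f x))" and f_pos: "\<And>x. f x > 0"
    and B: "B \<in> sets borel" and interval: "\<alpha> < \<beta>" "{\<alpha>..\<beta>} \<subseteq> B"
  shows "prob (X -` B \<inter> space M) > 0"
proof -
  have f_meas: "(\<lambda>x. ennreal (f x)) \<in> borel_measurable lborel"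
    using dens by (simp add: distributed_def)
  have X_meas: "X \<in> borel_measurable M"
    using dens by (auto dest: distributed_measurable)
  have integrand_meas: "(\<lambda>x. ennreal (f x) * indicator {\<alpha>..\<beta>} x) \<in> borel_measurable lborel"
    using f_meas by measurable
  have "(\<integral>\<^sup>+ x. ennreal (f x) * indicator {\<alpha>..\<beta>} x \<partial>lborel) \<noteq> 0"
  proof
    assume "(\<integral>\<^sup>+ x. ennreal (f x) * indicator {\<alpha>..\<beta>} x \<partial>lborel) = 0"
    then have "AE x in lborel. ennreal (f x) * indicator {\<alpha>..\<beta>} x = 0"
      using nn_integral_0_iff_AE[OF integrand_meas] by simp
    moreover have "ennreal (f x) * indicator {\<alpha>..\<beta>} x = 0 \<Longrightarrow> x \<notin> {\<alpha>..\<beta>}" for x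
      using f_pos[of x] by (auto simp: indicator_def)
    ultimately have "AE x in lborel. x \<notin> {\<alpha>..\<beta>}"
      by (rule eventually_mono)
    then have "emeasure lborel {\<alpha>..\<beta>} = 0"
      by (subst (asm) AE_iff_measurable[where N="{\<alpha>..\<beta>}"]) auto
    then show False
      using interval by simp
  qed
  then have "0 < emeasure (density lborel (\<lambda>x. ennreal (f x))) {\<alpha>..\<beta>}"
    by (subst emeasure_density[OF f_meas]) (auto simp: zero_less_iff_neq_zero)
  also have "\<dots> \<le> emeasure (density lborel (\<lambda>x. ennreal (f x))) B"
    using B interval by (intro emeasure_mono) auto
  also have "\<dots> = emeasure (distr M lborel X) B"
    using dens unfolding distributed_def by simp
  also have "\<dots> = ennreal (prob (X -` B \<inter> space M))"
    using B X_meas by (simp add: emeasure_distr emeasure_eq_measure)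
  finally show ?thesis
    by simp
qed

lemma bigo_root_power_from_blocks:
  fixes g :: "nat \<Rightarrow> real" and \<beta> C :: real and L s :: nat
  assumes \<beta>: "0 < \<beta>" "\<beta> < 1" and L: "0 < L" and C: "0 \<le> C"
    and bound: "\<And>k N. N * L + s < k \<Longrightarrow> \<bar>g k\<bar> \<le> C * \<beta> ^ N"
  shows "g \<in> O(\<lambda>k. root L \<beta> ^ k)"
proof -
  define \<rho> where "\<rho> = root L \<beta>"
  have \<rho>: "0 < \<rho>" "\<rho> < 1" "\<rho> ^ L = \<beta>"
    using \<beta> L by (auto simp: \<rho>_def real_root_pow_pos2)
  have "\<bar>g k\<bar> \<le> C / \<rho> ^ (s + L) * \<rho> ^ k" if k: "s + L < k" for k
  proof -
    define N where "N = (k - s - 1) div L"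
    have "N * L + (k - s - 1) mod L = k - s - 1"
      unfolding N_def by (rule div_mult_mod_eq)
    moreover have "(k - s - 1) mod L < L"
      using L by simp
    ultimately have N_low: "N * L + s < k" and N_high: "k - (s + L) \<le> L * N"
      using k by (simp_all add: mult.commute)
    have "\<beta> ^ N = \<rho> ^ (L * N)"
      by (simp add: power_mult \<rho>)
    also have "\<dots> \<le> \<rho> ^ (k - (s + L))"
      using \<rho> N_high by (intro power_decreasing) auto
    also have "\<dots> = \<rho> ^ k / \<rho> ^ (s + L)"
      using \<rho>(1) k by (simp add: power_diff)
    finally have "C * \<beta> ^ N \<le> C * (\<rho> ^ k / \<rho> ^ (s + L))"
      using C by (rule mult_left_mono)
    then show ?thesis
      using bound[OF N_low] by simp
  qed
  then have "eventually (\<lambda>k. norm (g k) \<le> C / \<rho> ^ (s + L) * norm (\<rho> ^ k)) at_top"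
    using \<rho>(1) by (auto simp: eventually_at_top_dense)
  then show ?thesis
    unfolding \<rho>_def[symmetric] by (rule bigoI)
qed

locale tar_ma =
  fixes \<mu>1 \<mu>2 :: real and \<phi> \<psi> :: "nat \<Rightarrow> real" and q d :: nat and r :: real
begin

definition ma1 :: "(int \<Rightarrow> real) \<Rightarrow> int \<Rightarrow> real" where
  "ma1 x t = \<mu>1 + x t + (\<Sum>i=1..q. \<phi> i * x (t - int i))"

definition ma2 :: "(int \<Rightarrow> real) \<Rightarrow> int \<Rightarrow> real" where
  "ma2 x t = \<mu>2 + x t + (\<Sum>i=1..q. \<psi> i * x (t - int i))"

(* Bound on the MA parts when the lagged noise lies in [-1,1]. *)
definition ma_bound :: real where
  "ma_bound = \<bar>\<mu>1\<bar> + \<bar>\<mu>2\<bar> + (\<Sum>i=1..q. \<bar>\<phi> i\<bar> + \<bar>\<psi> i\<bar>)"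

(* At an anchor t both regimes produce a value <= r, whatever the past of the process. *)
definition anchor :: "(int \<Rightarrow> real) \<Rightarrow> int \<Rightarrow> bool" where
  "anchor x t \<longleftrightarrow> x t \<le> r - ma_bound \<and> (\<forall>i\<in>{1..q}. \<bar>x (t - int i)\<bar> \<le> 1)"

lemma weighted_sum_bound:
  fixes c :: "nat \<Rightarrow> real"
  assumes "\<forall>i\<in>{1..q}. \<bar>x (t - int i)\<bar> \<le> 1"
  shows "\<bar>\<Sum>i=1..q. c i * x (t - int i)\<bar> \<le> (\<Sum>i=1..q. \<bar>c i\<bar>)"
proof -
  have "\<bar>\<Sum>i=1..q. c i * x (t - int i)\<bar> \<le> (\<Sum>i=1..q. \<bar>c i * x (t - int i)\<bar>)"
    by (rule sum_abs)
  also have "\<dots> \<le> (\<Sum>i=1..q. \<bar>c i\<bar>)"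
    using assms by (intro sum_mono) (simp add: abs_mult mult_left_le)
  finally show ?thesis .
qed

lemma anchor_below_threshold:
  assumes "anchor x t"
  shows "ma1 x t \<le> r" and "ma2 x t \<le> r"
proof -
  have window: "\<forall>i\<in>{1..q}. \<bar>x (t - int i)\<bar> \<le> 1" and low: "x t \<le> r - ma_bound"
    using assms by (auto simp: anchor_def)
  have "ma_bound = \<bar>\<mu>1\<bar> + \<bar>\<mu>2\<bar> + (\<Sum>i=1..q. \<bar>\<phi> i\<bar>) + (\<Sum>i=1..q. \<bar>\<psi> i\<bar>)"
    by (simp add: ma_bound_def sum.distrib)
  moreover have "0 \<le> (\<Sum>i=1..q. \<bar>\<phi> i\<bar>)" "0 \<le> (\<Sum>i=1..q. \<bar>\<psi> i\<bar>)"
    by (auto intro: sum_nonneg)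
  ultimately show "ma1 x t \<le> r" "ma2 x t \<le> r"
    using low weighted_sum_bound[OF window, of \<phi>] weighted_sum_bound[OF window, of \<psi>]
    unfolding ma1_def ma2_def by (auto simp: abs_le_iff)
qed

(* The anchor condition is a product condition on the noise window [t-q, t]. *)
definition anchor_set :: "int \<Rightarrow> int \<Rightarrow> real set" where
  "anchor_set t s = (if s = t then {..r - ma_bound} else {-1..1})"

lemma anchor_iff_window: "anchor x t \<longleftrightarrow> (\<forall>s\<in>{t - int q..t}. x s \<in> anchor_set t s)"
proof
  assume anchor: "anchor x t"
  show "\<forall>s\<in>{t - int q..t}. x s \<in> anchor_set t s"
  proof
    fix s assume s: "s \<in> {t - int q..t}"
    show "x s \<in> anchor_set t s"
    proof (cases "s = t")
      case True
      then show ?thesis using anchor by (simp add: anchor_set_def anchor_def)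
    next
      case False
      with s obtain i where "i \<in> {1..q}" "s = t - int i"
        by (intro that[of "nat (t - s)"]) auto
      then show ?thesis
        using anchor False unfolding anchor_def anchor_set_def by (auto simp: abs_le_iff)
    qed
  qed
next
  assume window: "\<forall>s\<in>{t - int q..t}. x s \<in> anchor_set t s"
  have "x t \<in> anchor_set t t"
    using window by simp
  moreover have "\<bar>x (t - int i)\<bar> \<le> 1" if "i \<in> {1..q}" for i
    using window[rule_format, of "t - int i"] that by (auto simp: anchor_set_def abs_le_iff)
  ultimately show "anchor x t"
    by (simp add: anchor_def anchor_set_def)
qed

(* Reconstruction from an anchor t: forward x t i is the value at t + (i+1) d, obtained by
   following the known regime at each step. *)
primrec forward :: "(int \<Rightarrow> real) \<Rightarrow> int \<Rightarrow> nat \<Rightarrow> real" where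
  "forward x t 0 = ma1 x (t + int d)"
| "forward x t (Suc i) =
     (if forward x t i \<le> r then ma1 x (t + int (Suc (Suc i)) * int d)
      else ma2 x (t + int (Suc (Suc i)) * int d))"

lemma forward_solution:
  assumes rec: "\<And>n. yy n = (if yy (n - int d) \<le> r then ma1 x n else ma2 x n)"
    and anchor: "anchor x t"
  shows "yy (t + int (Suc i) * int d) = forward x t i"
proof (induction i)
  case 0
  have "yy t \<le> r"
    using rec[of t] anchor_below_threshold[OF anchor] by auto
  then show ?case
    using rec[of "t + int d"] by simp
next
  case (Suc i)
  have previous: "t + int (Suc (Suc i)) * int d - int d = t + int (Suc i) * int d"
    by (simp add: algebra_simps)
  show ?case
    using rec[of "t + int (Suc (Suc i)) * int d"] Suc.IH unfolding previous by simp
qed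

(* Candidate anchors for time n are n - j*block; block is a multiple of d (so n is reached from them)
   and, for d >= 1, exceeds q (so their noise windows are disjoint). *)
definition block :: nat where
  "block = d * (q + 1)"

(* approx x n m k tries the candidates n - j*block for j = k, ..., k+m-1 and reconstructs the value at
   n from the first anchor found; no_anchor x n N states that none of the first N candidates is one. *)
primrec approx :: "(int \<Rightarrow> real) \<Rightarrow> int \<Rightarrow> nat \<Rightarrow> nat \<Rightarrow> real" where
  "approx x n 0 k = 0"
| "approx x n (Suc m) k =
     (if anchor x (n - int k * int block) then forward x (n - int k * int block) (k * (q + 1) - 1)
      else approx x n m (Suc k))"

definition no_anchor :: "(int \<Rightarrow> real) \<Rightarrow> int \<Rightarrow> nat \<Rightarrow> bool" where
  "no_anchor x n N \<longleftrightarrow> (\<forall>j\<in>{1..N}. \<not> anchor x (n - int j * int block))"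

lemma forward_reaches:
  assumes "1 \<le> k"
  shows "n - int k * int block + int (Suc (k * (q + 1) - 1)) * int d = n"
proof -
  have "Suc (k * (q + 1) - 1) = k * (q + 1)"
    using assms by (simp add: Suc_le_eq)
  then show ?thesis
    unfolding block_def by (simp add: algebra_simps)
qed

lemma approx_eq_solution_from:
  assumes rec: "\<And>n. yy n = (if yy (n - int d) \<le> r then ma1 x n else ma2 x n)"
  shows "1 \<le> k \<Longrightarrow> \<exists>j. k \<le> j \<and> j < k + m \<and> anchor x (n - int j * int block)
         \<Longrightarrow> approx x n m k = yy n"
proof (induction m arbitrary: k)
  case 0
  then show ?case by auto
next
  case (Suc m)
  show ?case
  proof (cases "anchor x (n - int k * int block)")
    case True
    then show ?thesis
      using forward_solution[OF rec True, of "k * (q + 1) - 1"] forward_reaches[OF Suc.prems(1)]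
      by simp
  next
    case False
    then have "\<exists>j. Suc k \<le> j \<and> j < Suc k + m \<and> anchor x (n - int j * int block)"
      using Suc.prems(2) by (metis Suc_leI add_Suc_shift le_neq_implies_less)
    then show ?thesis
      using False Suc.IH[of "Suc k"] by simp
  qed
qed

corollary approx_eq_solution:
  assumes "\<And>n. yy n = (if yy (n - int d) \<le> r then ma1 x n else ma2 x n)"
    and "\<not> no_anchor x n N"
  shows "approx x n N 1 = yy n"
proof -
  obtain j where "j \<in> {1..N}" "anchor x (n - int j * int block)"
    using assms(2) unfolding no_anchor_def by auto
  then show ?thesis
    by (intro approx_eq_solution_from[OF assms(1)]) auto
qed

lemma ma_local:
  assumes "\<forall>s\<in>{t - int q..t}. x s = x' s"
  shows "ma1 x t = ma1 x' t" and "ma2 x t = ma2 x' t" and "anchor x t = anchor x' t"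
proof -
  have "x t = x' t" "\<forall>i\<in>{1..q}. x (t - int i) = x' (t - int i)"
    using assms by auto
  then show "ma1 x t = ma1 x' t" "ma2 x t = ma2 x' t" "anchor x t = anchor x' t"
    unfolding ma1_def ma2_def anchor_def by (auto intro!: sum.cong)
qed

lemma forward_local:
  "\<forall>s\<in>{t - int q..t + int (Suc i) * int d}. x s = x' s \<Longrightarrow> forward x t i = forward x' t i"
proof (induction i)
  case 0
  then show ?case
    by (simp add: ma_local)
next
  case (Suc i)
  have "\<forall>s\<in>{t - int q..t + int (Suc i) * int d}. x s = x' s"
    using Suc.prems by (auto simp: algebra_simps)
  moreover have "\<forall>s\<in>{t + int (Suc (Suc i)) * int d - int q..t + int (Suc (Suc i)) * int d}. x s = x' s"
  proof
    fix s assume s: "s \<in> {t + int (Suc (Suc i)) * int d - int q..t + int (Suc (Suc i)) * int d}"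
    have "0 \<le> int (Suc (Suc i)) * int d"
      by simp
    then have "s \<in> {t - int q..t + int (Suc (Suc i)) * int d}"
      using s unfolding atLeastAtMost_iff by (elim conjE) (intro conjI; linarith)
    then show "x s = x' s"
      using Suc.prems by blast
  qed
  ultimately show ?case
    using Suc.IH ma_local by simp
qed

lemma approx_local:
  "1 \<le> k \<Longrightarrow> \<forall>s\<in>{n - int ((k + m - 1) * block) - int q..n}. x s = x' s
   \<Longrightarrow> approx x n m k = approx x' n m k"
proof (induction m arbitrary: k)
  case 0
  then show ?case by simp
next
  case (Suc m)
  define t where "t = n - int k * int block"
  have "int (k * block) \<le> int ((k + Suc m - 1) * block)"
    by (simp only: of_nat_le_iff) simp
  then have window: "{t - int q..n} \<subseteq> {n - int ((k + Suc m - 1) * block) - int q..n}"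
    unfolding t_def by auto
  have reach: "t + int (Suc (k * (q + 1) - 1)) * int d = n"
    using forward_reaches[OF Suc.prems(1)] unfolding t_def .
  have "forward x t (k * (q + 1) - 1) = forward x' t (k * (q + 1) - 1)"
    using Suc.prems(2) window by (intro forward_local) (auto simp only: reach)
  moreover have "anchor x t = anchor x' t"
  proof (rule ma_local(3))
    have "{t - int q..t} \<subseteq> {t - int q..n}"
      unfolding t_def by simp
    then show "\<forall>s\<in>{t - int q..t}. x s = x' s"
      using Suc.prems(2) window by blast
  qed
  moreover have "approx x n m (Suc k) = approx x' n m (Suc k)"
    using Suc.prems by (intro Suc.IH) auto
  ultimately show ?case
    by (simp add: t_def)
qed

lemma no_anchor_local:
  assumes "\<forall>s\<in>{n - int (N * block) - int q..n}. x s = x' s"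
  shows "no_anchor x n N = no_anchor x' n N"
proof -
  have "anchor x (n - int j * int block) = anchor x' (n - int j * int block)" if "j \<in> {1..N}" for j
  proof (rule ma_local(3), rule ballI)
    fix s assume s: "s \<in> {n - int j * int block - int q..n - int j * int block}"
    have "int j * int block \<le> int N * int block"
      using that by (auto intro: mult_right_mono)
    moreover have "0 \<le> int j * int block"
      by simp
    moreover have "n - int j * int block - int q \<le> s" "s \<le> n - int j * int block"
      using s by auto
    ultimately have "s \<in> {n - int (N * block) - int q..n}"
      unfolding atLeastAtMost_iff of_nat_mult by (intro conjI) linarith+
    then show "x s = x' s"
      using assms by blast
  qed
  then show ?thesis
    unfolding no_anchor_def by auto
qed

lemma ma_measurable[measurable]:
  "(\<lambda>x. ma1 x t) \<in> borel_measurable (PiM UNIV (\<lambda>_. borel))"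
  "(\<lambda>x. ma2 x t) \<in> borel_measurable (PiM UNIV (\<lambda>_. borel))"
  unfolding ma1_def ma2_def by measurable

lemma anchor_measurable[measurable]: "Measurable.pred (PiM UNIV (\<lambda>_. borel)) (\<lambda>x. anchor x t)"
  unfolding anchor_def by measurable

lemma forward_measurable[measurable]:
  "(\<lambda>x. forward x t i) \<in> borel_measurable (PiM UNIV (\<lambda>_. borel))"
  by (induction i) auto

lemma approx_measurable[measurable]:
  "(\<lambda>x. approx x n m k) \<in> borel_measurable (PiM UNIV (\<lambda>_. borel))"
  by (induction m arbitrary: k) auto

lemma no_anchor_measurable[measurable]:
  "Measurable.pred (PiM UNIV (\<lambda>_. borel)) (\<lambda>x. no_anchor x n N)"
  unfolding no_anchor_def by measurable

end

lemma ind_interval_measurable[measurable]: "ind_interval u1 u2 \<in> borel_measurable borel"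
  unfolding ind_interval_def by measurable

lemma ind_interval_unit: "0 \<le> ind_interval u1 u2 x \<and> ind_interval u1 u2 x \<le> 1"
  unfolding ind_interval_def by auto

locale tar_ma_noise = tar_ma \<mu>1 \<mu>2 \<phi> \<psi> q d r + prob_space M
  for \<mu>1 \<mu>2 :: real and \<phi> \<psi> :: "nat \<Rightarrow> real" and q d :: nat and r :: real
    and M :: "'a measure" +
  fixes e :: "int \<Rightarrow> 'a \<Rightarrow> real" and f :: "real \<Rightarrow> real"
  assumes indep: "indep_vars (\<lambda>_. borel) e UNIV"
    and dens: "\<And>n. distributed M lborel (e n) (\<lambda>x. ennreal (f x))"
    and f_pos: "\<And>x. f x > 0"
    and d_pos: "d \<ge> 1"
begin

abbreviation path :: "'a \<Rightarrow> int \<Rightarrow> real" where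
  "path \<omega> \<equiv> \<lambda>i. e i \<omega>"

lemma path_measurable[measurable]: "path \<in> measurable M (PiM UNIV (\<lambda>_. borel))"
proof -
  have "e i \<in> borel_measurable M" for i
    using indep unfolding indep_vars_def by auto
  then show ?thesis
    using measurable_restrict[of UNIV e M "\<lambda>_. borel"] by (simp add: restrict_UNIV)
qed

lemma block_gt_q: "q < block"
proof -
  have "q + 1 \<le> d * (q + 1)"
    using mult_le_mono1[OF d_pos, of "q + 1"] by simp
  then show ?thesis
    unfolding block_def by simp
qed

(* By independence, every time point is an anchor with the same probability. *)
definition anchor_prob :: real where
  "anchor_prob = prob (e 0 -` {..r - ma_bound} \<inter> space M) * prob (e 0 -` {-1..1} \<inter> space M) ^ q"

lemma anchor_prob_pos: "0 < anchor_prob"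
proof -
  have "0 < prob (e 0 -` {..r - ma_bound} \<inter> space M)"
    by (rule prob_positive_density[OF dens f_pos, of _ "r - ma_bound - 1" "r - ma_bound"]) auto
  moreover have "0 < prob (e 0 -` {-1..1} \<inter> space M)"
    by (rule prob_positive_density[OF dens f_pos, of _ "-1" "1"]) auto
  ultimately show ?thesis
    unfolding anchor_prob_def by simp
qed

lemma prob_anchor: "prob {\<omega>\<in>space M. anchor (path \<omega>) t} = anchor_prob"
proof -
  define J where "J = {t - int q..t}"
  have J: "finite J" "J \<noteq> {}" "t \<in> J" "card (J - {t}) = q"
    unfolding J_def by auto
  have events_eq: "{\<omega>\<in>space M. anchor (path \<omega>) t} = (\<Inter>s\<in>J. e s -` anchor_set t s \<inter> space M)"
    using J(2) unfolding anchor_iff_window J_def by auto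
  have "prob (\<Inter>s\<in>J. e s -` anchor_set t s \<inter> space M) = (\<Prod>s\<in>J. prob (e s -` anchor_set t s \<inter> space M))"
    by (rule indep_varsD[OF indep]) (auto simp: J anchor_set_def)
  also have "\<dots> = (\<Prod>s\<in>J. prob (e 0 -` anchor_set t s \<inter> space M))"
    by (intro prod.cong refl prob_identically_distributed[OF dens dens]) (simp add: anchor_set_def)
  also have "\<dots> = prob (e 0 -` anchor_set t t \<inter> space M)
                  * (\<Prod>s\<in>J - {t}. prob (e 0 -` anchor_set t s \<inter> space M))"
    using J by (simp add: prod.remove)
  also have "\<dots> = anchor_prob"
    using J(4) by (simp add: anchor_set_def anchor_prob_def)
  finally show ?thesis
    unfolding events_eq .
qed

lemma anchor_prob_le_1: "anchor_prob \<le> 1"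
  using prob_anchor[of 0] prob_le_1 by metis

(* The first N candidates all fail with probability (1 - p)^N, by independence of the disjoint
   windows. *)
lemma prob_no_anchor: "prob {\<omega>\<in>space M. no_anchor (path \<omega>) n N} = (1 - anchor_prob) ^ N"
proof (induction N)
  case 0
  then show ?case
    by (simp add: no_anchor_def prob_space)
next
  case (Suc N)
  define t where "t = n - int (Suc N) * int block"
  define F where "F x = (if no_anchor x n N then 1 else 0 :: real)" for x
  define G where "G x = (if \<not> anchor x t then 1 else 0 :: real)" for x
  have split: "no_anchor x n (Suc N) \<longleftrightarrow> no_anchor x n N \<and> \<not> anchor x t" for x
  proof -
    have "{1..Suc N} = insert (Suc N) {1..N}"
      by auto
    then show ?thesis
      unfolding no_anchor_def t_def by auto
  qed
  have disjoint: "{n - int (N * block) - int q..n} \<inter> {t - int q..t} = {}"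
    using block_gt_q unfolding t_def by (auto simp: algebra_simps)
  have "expectation (\<lambda>\<omega>. F (path \<omega>) * G (path \<omega>))
        = expectation (\<lambda>\<omega>. F (path \<omega>)) * expectation (\<lambda>\<omega>. G (path \<omega>))"
  proof (rule indep_vars_functions_uncorrelated[OF indep _ _ _ _ _ _ disjoint, where B=1])
    show "F x = F x'" if "\<forall>i\<in>{n - int (N * block) - int q..n}. x i = x' i" for x x'
      unfolding F_def using no_anchor_local[OF that] by simp
    show "G x = G x'" if "\<forall>i\<in>{t - int q..t}. x i = x' i" for x x'
      unfolding G_def using ma_local(3)[OF that] by simp
  qed (auto simp: F_def G_def)
  moreover have "prob {\<omega>\<in>space M. no_anchor (path \<omega>) n (Suc N)}
                 = expectation (\<lambda>\<omega>. F (path \<omega>) * G (path \<omega>))"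
    unfolding prob_pred_eq_expectation[OF measurable_compose[OF path_measurable no_anchor_measurable]]
    by (intro Bochner_Integration.integral_cong) (auto simp: split F_def G_def)
  moreover have "expectation (\<lambda>\<omega>. F (path \<omega>)) = (1 - anchor_prob) ^ N"
    unfolding F_def Suc.IH[symmetric] by (rule prob_pred_eq_expectation[symmetric]) measurable
  moreover have "expectation (\<lambda>\<omega>. G (path \<omega>)) = 1 - anchor_prob"
  proof -
    have "{\<omega>\<in>space M. \<not> anchor (path \<omega>) t} = space M - {\<omega>\<in>space M. anchor (path \<omega>) t}"
      by auto
    then have "prob {\<omega>\<in>space M. \<not> anchor (path \<omega>) t} = 1 - anchor_prob"
      by (simp add: prob_compl prob_anchor)
    then show ?thesis
      unfolding G_def by (subst (asm) prob_pred_eq_expectation) auto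
  qed
  ultimately show ?case
    by simp
qed

lemma approx_ae:
  fixes y :: "int \<Rightarrow> 'a \<Rightarrow> real"
  assumes rec: "AE \<omega> in M. \<forall>n. y n \<omega> = (if y (n - int d) \<omega> \<le> r then ma1 (path \<omega>) n else ma2 (path \<omega>) n)"
  shows "AE \<omega> in M. y n \<omega> \<noteq> approx (path \<omega>) n N 1 \<longrightarrow> no_anchor (path \<omega>) n N"
  using rec
proof eventually_elim
  case (elim \<omega>)
  then have "\<And>m. y m \<omega> = (if y (m - int d) \<omega> \<le> r then ma1 (path \<omega>) m else ma2 (path \<omega>) m)"
    by blast
  then show ?case
    using approx_eq_solution[of "\<lambda>m. y m \<omega>"] by metis
qed

(* Reconstructions of y_0 and y_k from N candidates each use disjoint noise windows once
   N blocks plus q fit between 0 and k, so their interval indicators are uncorrelated. *)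
lemma approx_indicators_uncorrelated:
  assumes far: "N * block + q < k"
  shows "expectation (\<lambda>\<omega>. ind_interval u1 u2 (approx (path \<omega>) 0 N 1)
                          * ind_interval v1 v2 (approx (path \<omega>) (int k) N 1))
         = expectation (\<lambda>\<omega>. ind_interval u1 u2 (approx (path \<omega>) 0 N 1))
           * expectation (\<lambda>\<omega>. ind_interval v1 v2 (approx (path \<omega>) (int k) N 1))"
proof -
  have disjoint_windows: "{0 - int (N * block) - int q..0} \<inter> {int k - int (N * block) - int q..int k} = {}"
  proof -
    have "int N * int block + int q < int k"
      using far by (simp only: of_nat_mult[symmetric] of_nat_add[symmetric] of_nat_less_iff)
    then show ?thesis
      by auto
  qed
  show ?thesis
  proof (rule indep_vars_functions_uncorrelated[OF indep _ _ _ _ _ _ disjoint_windows, where B=1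
           and F="\<lambda>x. ind_interval u1 u2 (approx x 0 N 1)"
           and G="\<lambda>x. ind_interval v1 v2 (approx x (int k) N 1)"])
    show "ind_interval u1 u2 (approx x 0 N 1) = ind_interval u1 u2 (approx x' 0 N 1)"
      if "\<forall>i\<in>{0 - int (N * block) - int q..0}. x i = x' i" for x x'
      using approx_local[of 1 0 N x x'] that by simp
    show "ind_interval v1 v2 (approx x (int k) N 1) = ind_interval v1 v2 (approx x' (int k) N 1)"
      if "\<forall>i\<in>{int k - int (N * block) - int q..int k}. x i = x' i" for x x'
      using approx_local[of 1 "int k" N x x'] that by simp
  qed (use ind_interval_unit in \<open>auto\<close>)
qed

lemma covariance_indicator_bound:
  fixes y :: "int \<Rightarrow> 'a \<Rightarrow> real"
  assumes rec: "AE \<omega> in M. \<forall>n. y n \<omega> = (if y (n - int d) \<omega> \<le> r then ma1 (path \<omega>) n else ma2 (path \<omega>) n)"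
    and y_meas[measurable]: "\<And>n. y n \<in> borel_measurable M"
    and far: "N * block + q < k"
  shows "\<bar>covariance M (\<lambda>\<omega>. ind_interval u1 u2 (y 0 \<omega>)) (\<lambda>\<omega>. ind_interval v1 v2 (y (int k) \<omega>))\<bar>
         \<le> 4 * (1 - anchor_prob) ^ N"
proof -
  define E1 where "E1 = {\<omega>\<in>space M. no_anchor (path \<omega>) 0 N}"
  define E2 where "E2 = {\<omega>\<in>space M. no_anchor (path \<omega>) (int k) N}"
  have events[measurable]: "E1 \<in> events" "E2 \<in> events"
    unfolding E1_def E2_def by measurable
  have "\<bar>covariance M (\<lambda>\<omega>. ind_interval u1 u2 (y 0 \<omega>)) (\<lambda>\<omega>. ind_interval v1 v2 (y (int k) \<omega>))\<bar>
        \<le> 2 * (prob E1 + prob E2)"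
  proof (rule covariance_perturbation_bound[where a'="\<lambda>\<omega>. ind_interval u1 u2 (approx (path \<omega>) 0 N 1)"
        and b'="\<lambda>\<omega>. ind_interval v1 v2 (approx (path \<omega>) (int k) N 1)"])
    show "AE \<omega> in M. ind_interval u1 u2 (y 0 \<omega>) \<noteq> ind_interval u1 u2 (approx (path \<omega>) 0 N 1)
                      \<longrightarrow> \<omega> \<in> E1"
      using approx_ae[OF rec, of 0 N] AE_space by eventually_elim (auto simp: E1_def)
    show "AE \<omega> in M. ind_interval v1 v2 (y (int k) \<omega>) \<noteq> ind_interval v1 v2 (approx (path \<omega>) (int k) N 1)
                      \<longrightarrow> \<omega> \<in> E2"
      using approx_ae[OF rec, of "int k" N] AE_space by eventually_elim (auto simp: E2_def)
    show "expectation (\<lambda>\<omega>. ind_interval u1 u2 (approx (path \<omega>) 0 N 1)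
                                * ind_interval v1 v2 (approx (path \<omega>) (int k) N 1))
               = expectation (\<lambda>\<omega>. ind_interval u1 u2 (approx (path \<omega>) 0 N 1))
                 * expectation (\<lambda>\<omega>. ind_interval v1 v2 (approx (path \<omega>) (int k) N 1))"
      using far by (rule approx_indicators_uncorrelated)
  qed (use ind_interval_unit in \<open>auto\<close>)
  also have "\<dots> = 4 * (1 - anchor_prob) ^ N"
    unfolding E1_def E2_def prob_no_anchor by simp
  finally show ?thesis .
qed

end

theorem mainTheorem4:
  fixes M :: "'a measure"
    and e y :: "int \<Rightarrow> 'a \<Rightarrow> real"
    and f :: "real \<Rightarrow> real"
    and q d :: nat
    and r \<mu>1 \<mu>2 :: real
    and \<phi> \<psi> :: "nat \<Rightarrow> real"
  assumes prob: "prob_space M"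
    and indep: "prob_space.indep_vars M (\<lambda>_. borel) e UNIV"
    and dens: "\<And>n. distributed M lborel (e n) (\<lambda>x. ennreal (f x))"
    and f_cont: "continuous_on UNIV f"
    and f_bdd: "bounded (range f)"
    and f_pos: "\<And>x. f x > 0"
    and q_pos: "q \<ge> 1" and d_pos: "d \<ge> 1"
    and y_rv: "\<And>n. y n \<in> borel_measurable M"
    and y_eq: "\<And>n. AE \<omega> in M. y n \<omega> =
                 (if y (n - int d) \<omega> \<le> r
                  then \<mu>1 + e n \<omega> + (\<Sum>i=1..q. \<phi> i * e (n - int i) \<omega>)
                  else \<mu>2 + e n \<omega> + (\<Sum>i=1..q. \<psi> i * e (n - int i) \<omega>))"
    and y_stat: "strictly_stationary M y"
  shows "\<exists>\<rho>::real. 0 < \<rho> \<and> \<rho> < 1 \<and>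
           (\<forall>u1 u2 v1 v2 :: ereal. u1 < u2 \<longrightarrow> v1 < v2 \<longrightarrow>
              (\<lambda>k::nat. covariance M (\<lambda>\<omega>. ind_interval u1 u2 (y 0 \<omega>))
                                      (\<lambda>\<omega>. ind_interval v1 v2 (y (int k) \<omega>)))
              \<in> O(\<lambda>k. \<rho> ^ k))"
proof -
  interpret tar_ma_noise \<mu>1 \<mu>2 \<phi> \<psi> q d r M e f
    by (intro tar_ma_noise.intro tar_ma_noise_axioms.intro prob indep dens f_pos d_pos)
  have rec: "AE \<omega> in M. \<forall>n. y n \<omega> =
               (if y (n - int d) \<omega> \<le> r then ma1 (path \<omega>) n else ma2 (path \<omega>) n)"
    unfolding ma1_def ma2_def AE_all_countable using y_eq by blast
  define \<beta> where "\<beta> = max (1 - anchor_prob) (1 / 2)"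
  have \<beta>: "0 < \<beta>" "\<beta> < 1" "1 - anchor_prob \<le> \<beta>"
    using anchor_prob_pos unfolding \<beta>_def by auto
  have block_pos: "0 < block"
    using block_gt_q by simp
  have decay: "\<bar>covariance M (\<lambda>\<omega>. ind_interval u1 u2 (y 0 \<omega>)) (\<lambda>\<omega>. ind_interval v1 v2 (y (int k) \<omega>))\<bar>
               \<le> 4 * \<beta> ^ N" if "N * block + q < k" for u1 u2 v1 v2 :: ereal and k N
  proof -
    have "(1 - anchor_prob) ^ N \<le> \<beta> ^ N"
      using anchor_prob_le_1 \<beta> by (intro power_mono) auto
    then show ?thesis
      using covariance_indicator_bound[OF rec y_rv that, of u1 u2 v1 v2] by simp
  qed
  show ?thesis
  proof (intro exI[of _ "root block \<beta>"] conjI allI impI)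
    show "0 < root block \<beta>" "root block \<beta> < 1"
      using \<beta> block_pos by auto
    fix u1 u2 v1 v2 :: ereal
    show "(\<lambda>k. covariance M (\<lambda>\<omega>. ind_interval u1 u2 (y 0 \<omega>))
                            (\<lambda>\<omega>. ind_interval v1 v2 (y (int k) \<omega>))) \<in> O(\<lambda>k. root block \<beta> ^ k)"
      using \<beta>(1,2) block_pos by (rule bigo_root_power_from_blocks[where C=4 and s=q]) (auto intro: decay)
  qed
qed

end
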